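(* Let $p$ be an odd prime and let $n,s$ be positive integers such that $2n/s\geq 3$ is an odd integer; put $q=p^n$, $d=p^s$. Fix $\mu\in\mathbb{F}_{q^2}\setminus\mathbb{F}_q$ such that $\mu^d=u_1+u_2\mu$ with $u_1,u_2\in\mathbb{F}_q$ and $u_2$ a $(d-1)$-th power in $\mathbb{F}_{q^2}$. Let \[ J=\{(a^d+a,\,x_1+x_2\mu): a,x_1\in\mathbb{F}_q,\ x_2\in\mathbb{F}_q^*\},\qquad K=\bigcup_{\beta\in\mathbb{F}_q}\phi_{(\beta\mu)^d+\beta\mu}(J). \] Then the subgraph $\mathcal{A}_{q^2,d}[K]$ of $\mathcal{A}_{q^2,d}$ induced by $K$ satisfies $\chi(\mathcal{A}_{q^2,d}[K])\leq 2q$.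
   Context: The map $x\mapsto x^d+x$ is a bijection of $\mathbb{F}_{q^2}$. The graph $\mathcal{A}_{q^2,d}$ has vertex set $\mathbb{F}_{q^2}\times\mathbb{F}_{q^2}$; writing vertices as $(a^d+a,x)$ and $(b^d+b,y)$ with $a,b,x,y\in\mathbb{F}_{q^2}$ (uniquely), two distinct vertices are adjacent iff $a^db+ab^d=x+y$. For $k=\alpha^d+\alpha\in\mathbb{F}_{q^2}$, $\phi_k$ is the map $(a^d+a,x)\mapsto(a^d+a+k,\ x+a^d\alpha+a\alpha^d+\alpha^{d+1})$. $\mathbb{F}_q$ is the subfield of $\mathbb{F}_{q^2}$ of order $q$; $\chi$ is the chromatic number. *)

theory Defs
  imports "HOL-Computational_Algebra.Primes"
begin

text \<open>The unique a with a^d + a = u (x -> x^d + x is a bijection under the paper's hypotheses).\<close>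
definition pre :: "nat \<Rightarrow> 'a::field \<Rightarrow> 'a" where
  "pre d u = (THE a. a ^ d + a = u)"

text \<open>Adjacency of the graph A_{q^2,d}; vertices are pairs (a^d+a, x).\<close>
definition A_adj :: "nat \<Rightarrow> 'a::field \<times> 'a \<Rightarrow> 'a \<times> 'a \<Rightarrow> bool" where
  "A_adj d v w \<longleftrightarrow> v \<noteq> w \<and>
     (let a = pre d (fst v); b = pre d (fst w) in a ^ d * b + a * b ^ d = snd v + snd w)"

text \<open>phi_k for k = alpha^d + alpha, parametrised by alpha.\<close>
definition phi :: "nat \<Rightarrow> 'a::field \<Rightarrow> 'a \<times> 'a \<Rightarrow> 'a \<times> 'a" where
  "phi d \<alpha> v = (let a = pre d (fst v) in
     (fst v + (\<alpha> ^ d + \<alpha>), snd v + a ^ d * \<alpha> + a * \<alpha> ^ d + \<alpha> ^ (d + 1)))"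

definition Fq :: "nat \<Rightarrow> 'a::field set" where
  "Fq q = {x. x ^ q = x}"

definition Jset :: "nat \<Rightarrow> nat \<Rightarrow> 'a::field \<Rightarrow> ('a \<times> 'a) set" where
  "Jset q d \<mu> = {(a ^ d + a, x1 + x2 * \<mu>) | a x1 x2.
      a \<in> Fq q \<and> x1 \<in> Fq q \<and> x2 \<in> Fq q \<and> x2 \<noteq> 0}"

definition Kset :: "nat \<Rightarrow> nat \<Rightarrow> 'a::field \<Rightarrow> ('a \<times> 'a) set" where
  "Kset q d \<mu> = (\<Union>\<beta>\<in>Fq q. phi d (\<beta> * \<mu>) ` Jset q d \<mu>)"

definition colourable :: "('v \<Rightarrow> 'v \<Rightarrow> bool) \<Rightarrow> 'v set \<Rightarrow> nat \<Rightarrow> bool" where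
  "colourable adj K m \<longleftrightarrow> (\<exists>c :: 'v \<Rightarrow> nat. (\<forall>v\<in>K. c v < m) \<and>
      (\<forall>v\<in>K. \<forall>w\<in>K. adj v w \<longrightarrow> c v \<noteq> c w))"

definition chromatic_number :: "('v \<Rightarrow> 'v \<Rightarrow> bool) \<Rightarrow> 'v set \<Rightarrow> nat" where
  "chromatic_number adj K = (LEAST m. colourable adj K m)"

end

theory Submission
  imports Defs "HOL-Computational_Algebra.Polynomial" "HOL-Number_Theory.Residues" "HOL-Library.Countable"
begin

(*
  The translations phi_k preserve adjacency, and K is the union over beta in F_q of the copies
  phi_(beta mu)(J) of J; giving each copy two colours of its own yields 2q colours.
  Inside J, adjacency of (a^d + a, x1 + x2 mu) and (b^d + b, y1 + y2 mu) means
  a^d b + a b^d = (x1 + y1) + (x2 + y2) mu; the left side lies in F_q and mu is not in F_q,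
  so y2 = -x2. Colouring by a choice of one element from each pair {x, -x} (distinct in odd
  characteristic) is therefore proper on J.
  Reading a off a vertex requires x \<mapsto> x^d + x to be injective: on its kernel the Frobenius
  x \<mapsto> x^d acts as negation, while its (2n/s)-th iterate, an odd one, is the identity of F_(q^2).
*)

lemma colourableI:
  assumes "\<And>v. v \<in> K \<Longrightarrow> c v < m"
    and "\<And>v w. v \<in> K \<Longrightarrow> w \<in> K \<Longrightarrow> adj v w \<Longrightarrow> c v \<noteq> c w"
  shows "colourable adj K m"
  unfolding colourable_def using assms by blast

lemma colourableE:
  assumes "colourable adj K m"
  obtains c where "\<And>v. v \<in> K \<Longrightarrow> c v < m"
    and "\<And>v w. v \<in> K \<Longrightarrow> w \<in> K \<Longrightarrow> adj v w \<Longrightarrow> c v \<noteq> c w"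
  using assms unfolding colourable_def by blast

lemma colourable_mono:
  assumes "colourable adj K m" and "m \<le> m'"
  shows "colourable adj K m'"
proof -
  obtain c where "\<And>v. v \<in> K \<Longrightarrow> c v < m"
    and "\<And>v w. v \<in> K \<Longrightarrow> w \<in> K \<Longrightarrow> adj v w \<Longrightarrow> c v \<noteq> c w"
    using assms(1) by (metis colourableE)
  then show ?thesis
    using assms(2) by (intro colourableI[of K c]) (auto intro: order_less_le_trans)
qed

lemma chromatic_number_le:
  assumes "colourable adj K m"
  shows "chromatic_number adj K \<le> m"
  unfolding chromatic_number_def using assms by (rule Least_le)

lemma colourable_Un:
  assumes "colourable adj A m" and "colourable adj B k"
  shows "colourable adj (A \<union> B) (m + k)"
proof -
  obtain cA where cA: "\<And>v. v \<in> A \<Longrightarrow> cA v < m"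
    "\<And>v w. v \<in> A \<Longrightarrow> w \<in> A \<Longrightarrow> adj v w \<Longrightarrow> cA v \<noteq> cA w"
    using assms(1) by (metis colourableE)
  obtain cB where cB: "\<And>v. v \<in> B \<Longrightarrow> cB v < k"
    "\<And>v w. v \<in> B \<Longrightarrow> w \<in> B \<Longrightarrow> adj v w \<Longrightarrow> cB v \<noteq> cB w"
    using assms(2) by (metis colourableE)
  show ?thesis
  proof (rule colourableI[of _ "\<lambda>v. if v \<in> A then cA v else m + cB v"])
    show "(if v \<in> A then cA v else m + cB v) < m + k" if "v \<in> A \<union> B" for v
      using that cA(1) cB(1) by fastforce
    show "(if v \<in> A then cA v else m + cB v) \<noteq> (if w \<in> A then cA w else m + cB w)"
      if "v \<in> A \<union> B" "w \<in> A \<union> B" "adj v w" for v w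
      using that cA cB by (cases "v \<in> A"; cases "w \<in> A") (auto dest: cA(1))
  qed
qed

lemma colourable_UN:
  assumes "finite B" and "\<And>\<beta>. \<beta> \<in> B \<Longrightarrow> colourable adj (S \<beta>) m"
  shows "colourable adj (\<Union>\<beta>\<in>B. S \<beta>) (card B * m)"
  using assms
proof (induction B rule: finite_induct)
  case empty
  show ?case
    by (simp add: colourable_def)
next
  case (insert \<beta> B)
  then have "colourable adj (S \<beta> \<union> (\<Union>\<beta>\<in>B. S \<beta>)) (m + card B * m)"
    by (intro colourable_Un) auto
  then show ?case
    using insert.hyps by simp
qed

lemma colourable_image:
  assumes adj: "\<And>v w. v \<in> J \<Longrightarrow> w \<in> J \<Longrightarrow> adj (f v) (f w) \<Longrightarrow> adj' v w"
    and "colourable adj' J m"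
  shows "colourable adj (f ` J) m"
proof -
  obtain c where c: "\<And>v. v \<in> J \<Longrightarrow> c v < m"
    "\<And>v w. v \<in> J \<Longrightarrow> w \<in> J \<Longrightarrow> adj' v w \<Longrightarrow> c v \<noteq> c w"
    using assms(2) by (metis colourableE)
  define g where "g y = (SOME v. v \<in> J \<and> f v = y)" for y
  have g: "g y \<in> J" "f (g y) = y" if "y \<in> f ` J" for y
    using someI_ex[of "\<lambda>v. v \<in> J \<and> f v = y"] that unfolding g_def by blast+
  show ?thesis
  proof (rule colourableI[of _ "c \<circ> g"])
    show "(c \<circ> g) y < m" if "y \<in> f ` J" for y
      using that g c(1) by simp
    show "(c \<circ> g) y \<noteq> (c \<circ> g) z" if "y \<in> f ` J" "z \<in> f ` J" "adj y z" for y z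
      using that g[of y] g[of z] c(2) adj by simp
  qed
qed

lemma ex_antipodal_colouring:
  obtains \<sigma> :: "'a::{countable,group_add} \<Rightarrow> nat"
  where "\<And>x. \<sigma> x < 2" and "\<And>x. x \<noteq> - x \<Longrightarrow> \<sigma> x \<noteq> \<sigma> (- x)"
proof
  let ?\<sigma> = "\<lambda>x::'a. if to_nat x < to_nat (- x) then 1 else 0 :: nat"
  show "?\<sigma> x < 2" for x by simp
  show "?\<sigma> x \<noteq> ?\<sigma> (- x)" if "x \<noteq> - x" for x
    using that by auto
qed

lemma power_card_minus_one_eq_one:
  fixes x :: "'a::{field,finite}"
  assumes "x \<noteq> 0"
  shows "x ^ (card (UNIV :: 'a set) - 1) = 1"
proof -
  let ?N = "UNIV - {0 :: 'a}"
  have inj: "inj_on ((*) x) ?N"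
    using assms by (auto simp: inj_on_def)
  have onto: "(*) x ` ?N = ?N"
  proof
    show "?N \<subseteq> (*) x ` ?N"
    proof
      fix y assume "y \<in> ?N"
      then have "y = x * (y / x)" and "y / x \<in> ?N"
        using assms by auto
      then show "y \<in> (*) x ` ?N" by blast
    qed
  qed (use assms in auto)
  have "prod id ?N = prod ((*) x) ?N"
    using prod.reindex[OF inj, of id] onto by simp
  also have "\<dots> = x ^ (card (UNIV :: 'a set) - 1) * prod id ?N"
    by (simp add: prod.distrib card_Diff_singleton)
  finally have "prod id ?N = x ^ (card (UNIV :: 'a set) - 1) * prod id ?N" .
  moreover have "prod id ?N \<noteq> 0"
    by simp
  ultimately show ?thesis
    by (simp add: mult_cancel_right1)
qed

lemma power_card_eq_self:
  fixes x :: "'a::{field,finite}"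
  shows "x ^ card (UNIV :: 'a set) = x"
proof (cases "x = 0")
  case False
  have "card (UNIV :: 'a set) = Suc (card (UNIV :: 'a set) - 1)"
    using finite_UNIV_card_ge_0[where 'a = 'a] by simp
  then have "x ^ card (UNIV :: 'a set) = x * x ^ (card (UNIV :: 'a set) - 1)"
    by (metis power_Suc)
  then show ?thesis
    using power_card_minus_one_eq_one[OF False] by simp
qed (simp add: finite_UNIV_card_ge_0)

lemma CHAR_eq_of_card_eq_prime_power:
  assumes "prime p" and "k > 0" and "card (UNIV :: 'a::{field,finite} set) = p ^ k"
  shows "CHAR('a) = p"
proof -
  have "prime CHAR('a)"
    using prime_CHAR_semidom finite_imp_CHAR_pos[where 'a = 'a] by auto
  moreover have "CHAR('a) dvd p ^ k"
    using CHAR_dvd_CARD[where 'a = 'a] assms(3) by simp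
  ultimately show ?thesis
    using assms(1) by (metis prime_dvd_power primes_dvd_imp_eq)
qed

lemma inj_power_add_self:
  fixes d m :: nat
  assumes add_pow: "\<And>x y::'a::{field,finite}. (x + y) ^ d = x ^ d + y ^ d"
    and card: "card (UNIV :: 'a set) = d ^ m" and "odd m" and two: "(2::'a) \<noteq> 0"
  shows "inj (\<lambda>x::'a. x ^ d + x)"
proof (rule injI)
  have "d > 0"
  proof (rule ccontr)
    assume "\<not> d > 0"
    then have "card (UNIV :: 'a set) = 0"
      using card \<open>odd m\<close> by (simp add: zero_power odd_pos)
    then show False
      using finite_UNIV_card_ge_0[where 'a = 'a] by simp
  qed
  then have minus_pow: "(- y) ^ d = - (y ^ d)" for y :: 'a
    using add_pow[of y "- y"] by (simp add: zero_power eq_neg_iff_add_eq_0 add.commute)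
  have kernel: "z = 0" if "z ^ d + z = 0" for z :: 'a
  proof -
    have z: "z ^ d = - z"
      using that by (simp add: eq_neg_iff_add_eq_0)
    have iter: "z ^ (d ^ k) = (if even k then z else - z)" for k
    proof (induction k)
      case (Suc k)
      have "z ^ (d ^ Suc k) = (z ^ (d ^ k)) ^ d"
        by (simp add: power_mult[symmetric] mult.commute)
      then show ?case
        using Suc.IH z minus_pow by auto
    qed simp
    have "z = - z"
      using iter[of m] power_card_eq_self[of z] card \<open>odd m\<close> by simp
    then have "2 * z = 0"
      by (simp add: eq_neg_iff_add_eq_0)
    then show "z = 0"
      using two by simp
  qed
  fix x y :: 'a
  assume "x ^ d + x = y ^ d + y"
  then have "(x - y) ^ d + (x - y) = 0"
    using add_pow[of "x - y" y] by (simp add: algebra_simps)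
  then show "x = y"
    using kernel[of "x - y"] by simp
qed

lemma Fq_diff:
  fixes x y :: "'a::field"
  assumes add_pow: "\<And>x y::'a. (x + y) ^ q = x ^ q + y ^ q"
    and "x \<in> Fq q" and "y \<in> Fq q"
  shows "x - y \<in> Fq q"
proof -
  have "(x - y) ^ q + y = x"
    using assms add_pow[of "x - y" y] by (simp add: Fq_def)
  then show ?thesis
    by (simp add: Fq_def eq_diff_eq)
qed

lemma Fq_add:
  fixes x y :: "'a::field"
  assumes add_pow: "\<And>x y::'a. (x + y) ^ q = x ^ q + y ^ q"
    and "x \<in> Fq q" and "y \<in> Fq q"
  shows "x + y \<in> Fq q"
  using assms by (simp add: Fq_def)

lemma Fq_mult: "x \<in> Fq q \<Longrightarrow> y \<in> Fq q \<Longrightarrow> x * y \<in> Fq q"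
  by (simp add: Fq_def power_mult_distrib)

lemma Fq_divide: "x \<in> Fq q \<Longrightarrow> y \<in> Fq q \<Longrightarrow> x / y \<in> Fq q"
  by (simp add: Fq_def power_divide)

lemma Fq_power: "x \<in> Fq q \<Longrightarrow> x ^ k \<in> Fq q"
  by (simp add: Fq_def flip: power_mult) (metis mult.commute power_mult)

lemma card_Fq_le:
  assumes "q \<ge> 2"
  shows "card (Fq q :: 'a::field set) \<le> q"
proof -
  let ?P = "Polynomial.monom (1::'a) q + [:0, -1:]"
  have deg: "degree ?P = q"
    using assms by (subst degree_add_eq_left) (auto simp: degree_monom_eq)
  then have "card {x. poly ?P x = 0} \<le> q"
    using assms card_poly_roots_bound[of ?P] by fastforce
  moreover have "{x. poly ?P x = 0} = Fq q"
    by (auto simp: Fq_def poly_monom)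
  ultimately show ?thesis
    by simp
qed

lemma Fq_coord_eq_0:
  fixes \<mu> u x y :: "'a::field"
  assumes add_pow: "\<And>x y::'a. (x + y) ^ q = x ^ q + y ^ q"
    and "\<mu> \<notin> Fq q" and "u \<in> Fq q" and "x \<in> Fq q" and "y \<in> Fq q"
    and "u = x + y * \<mu>"
  shows "y = 0"
proof (rule ccontr)
  assume "y \<noteq> 0"
  then have "\<mu> = (u - x) / y"
    using assms(6) by (simp add: field_simps)
  moreover have "(u - x) / y \<in> Fq q"
    using assms(3-5) by (intro Fq_divide Fq_diff[OF add_pow])
  ultimately have "\<mu> \<in> Fq q"
    by simp
  then show False
    using assms(2) by contradiction
qed

lemma pre_power_add_self:
  fixes a :: "'a::field"
  assumes "inj (\<lambda>x::'a. x ^ d + x)"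
  shows "pre d (a ^ d + a) = a"
  unfolding pre_def by (rule the_equality) (use assms in \<open>auto dest: injD\<close>)

lemma phi_power_add_self:
  fixes a X \<alpha> :: "'a::field"
  assumes add_pow: "\<And>x y::'a. (x + y) ^ d = x ^ d + y ^ d"
    and inj: "inj (\<lambda>x::'a. x ^ d + x)"
  shows "phi d \<alpha> (a ^ d + a, X) =
    ((a + \<alpha>) ^ d + (a + \<alpha>), X + a ^ d * \<alpha> + a * \<alpha> ^ d + \<alpha> ^ (d + 1))"
  unfolding phi_def Let_def fst_conv snd_conv pre_power_add_self[OF inj] add_pow[of a \<alpha>]
  by (simp add: algebra_simps)

lemma A_adj_power_add_self:
  fixes a b X Y :: "'a::field"
  assumes "inj (\<lambda>x::'a. x ^ d + x)"
  shows "A_adj d (a ^ d + a, X) (b ^ d + b, Y) \<longleftrightarrow>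
    (a ^ d + a, X) \<noteq> (b ^ d + b, Y) \<and> a ^ d * b + a * b ^ d = X + Y"
  by (simp add: A_adj_def pre_power_add_self[OF assms])

lemma A_adj_phiD:
  fixes v w :: "'a::field \<times> 'a" and \<alpha> :: 'a
  assumes add_pow: "\<And>x y::'a. (x + y) ^ d = x ^ d + y ^ d"
    and bij: "bij (\<lambda>x::'a. x ^ d + x)"
    and adj: "A_adj d (phi d \<alpha> v) (phi d \<alpha> w)"
  shows "A_adj d v w"
proof -
  have inj: "inj (\<lambda>x::'a. x ^ d + x)"
    using bij by (rule bij_is_inj)
  obtain a b where "fst v = a ^ d + a" and "fst w = b ^ d + b"
    using surjD[OF bij_is_surj[OF bij], of "fst v"] surjD[OF bij_is_surj[OF bij], of "fst w"] by blast
  then obtain X Y where v: "v = (a ^ d + a, X)" and w: "w = (b ^ d + b, Y)"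
    by (metis prod.collapse)
  have "a ^ d * b + a * b ^ d = X + Y"
  proof -
    have "(a + \<alpha>) ^ d * (b + \<alpha>) + (a + \<alpha>) * (b + \<alpha>) ^ d
        = X + a ^ d * \<alpha> + a * \<alpha> ^ d + \<alpha> ^ (d + 1) + (Y + b ^ d * \<alpha> + b * \<alpha> ^ d + \<alpha> ^ (d + 1))"
      using adj by (simp add: v w phi_power_add_self[OF add_pow inj] A_adj_power_add_self[OF inj])
    moreover have "(a + \<alpha>) ^ d * (b + \<alpha>) + (a + \<alpha>) * (b + \<alpha>) ^ d
        - (X + a ^ d * \<alpha> + a * \<alpha> ^ d + \<alpha> ^ (d + 1) + (Y + b ^ d * \<alpha> + b * \<alpha> ^ d + \<alpha> ^ (d + 1)))
        = (a ^ d * b + a * b ^ d) - (X + Y)"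
      unfolding add_pow[of a \<alpha>] add_pow[of b \<alpha>] by (simp add: algebra_simps)
    ultimately show ?thesis
      by simp
  qed
  moreover have "v \<noteq> w"
    using adj by (auto simp: A_adj_def)
  ultimately show ?thesis
    by (simp add: v w A_adj_power_add_self[OF inj])
qed

lemma A_adj_Jset_opposite_coord:
  fixes a b x1 x2 y1 y2 \<mu> :: "'a::field"
  assumes add_pow: "\<And>x y::'a. (x + y) ^ q = x ^ q + y ^ q"
    and inj: "inj (\<lambda>x::'a. x ^ d + x)"
    and "\<mu> \<notin> Fq q" and "a \<in> Fq q" and "b \<in> Fq q"
    and "x1 \<in> Fq q" and "x2 \<in> Fq q" and "y1 \<in> Fq q" and "y2 \<in> Fq q"
    and "A_adj d (a ^ d + a, x1 + x2 * \<mu>) (b ^ d + b, y1 + y2 * \<mu>)"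
  shows "y2 = - x2"
proof -
  have "a ^ d * b + a * b ^ d = (x1 + x2 * \<mu>) + (y1 + y2 * \<mu>)"
    using assms(10) A_adj_power_add_self[OF inj] by blast
  also have "\<dots> = (x1 + y1) + (x2 + y2) * \<mu>"
    by (simp add: algebra_simps)
  finally have "a ^ d * b + a * b ^ d = (x1 + y1) + (x2 + y2) * \<mu>" .
  moreover have "a ^ d * b + a * b ^ d \<in> Fq q"
    using assms(4,5) by (intro Fq_add[OF add_pow] Fq_mult Fq_power)
  moreover have "x1 + y1 \<in> Fq q" and "x2 + y2 \<in> Fq q"
    using assms(6-9) by (simp_all add: Fq_add[OF add_pow])
  ultimately have "x2 + y2 = 0"
    using Fq_coord_eq_0[OF add_pow assms(3)] by blast
  then show ?thesis
    by (simp add: eq_neg_iff_add_eq_0 add.commute)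
qed

lemma colourable_phi_Jset:
  fixes \<mu> \<alpha> :: "'a::{field,countable}"
  assumes add_pow_d: "\<And>x y::'a. (x + y) ^ d = x ^ d + y ^ d"
    and add_pow_q: "\<And>x y::'a. (x + y) ^ q = x ^ q + y ^ q"
    and bij: "bij (\<lambda>x::'a. x ^ d + x)"
    and \<mu>_notin: "\<mu> \<notin> Fq q" and two: "(2::'a) \<noteq> 0"
  shows "colourable (A_adj d) (phi d \<alpha> ` Jset q d \<mu>) 2"
proof -
  define T :: "('a \<times> 'a \<times> 'a) set" where "T = Fq q \<times> Fq q \<times> (Fq q - {0})"
  define \<psi> :: "'a \<times> 'a \<times> 'a \<Rightarrow> 'a \<times> 'a" where "\<psi> = (\<lambda>(a, x1, x2). (a ^ d + a, x1 + x2 * \<mu>))"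
  have J: "Jset q d \<mu> = \<psi> ` T"
    unfolding Jset_def T_def \<psi>_def by force
  obtain \<sigma> :: "'a \<Rightarrow> nat" where \<sigma>: "\<And>x. \<sigma> x < 2" "\<And>x. x \<noteq> - x \<Longrightarrow> \<sigma> x \<noteq> \<sigma> (- x)"
    by (metis ex_antipodal_colouring)
  have "colourable (\<lambda>t t'. snd (snd t') = - snd (snd t)) T 2"
  proof (rule colourableI[of _ "\<sigma> \<circ> snd \<circ> snd"])
    show "(\<sigma> \<circ> snd \<circ> snd) t < 2" for t
      using \<sigma>(1) by simp
    show "(\<sigma> \<circ> snd \<circ> snd) t \<noteq> (\<sigma> \<circ> snd \<circ> snd) t'"
      if "t \<in> T" and "snd (snd t') = - snd (snd t)" for t t'
    proof -
      have "snd (snd t) \<noteq> 0"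
        using that(1) by (auto simp: T_def)
      then have "snd (snd t) \<noteq> - snd (snd t)"
        using two by (auto simp: eq_neg_iff_add_eq_0 simp flip: mult_2)
      then show ?thesis
        using \<sigma>(2) that(2) by simp
    qed
  qed
  moreover have "snd (snd t') = - snd (snd t)"
    if "t \<in> T" and "t' \<in> T" and "A_adj d (phi d \<alpha> (\<psi> t)) (phi d \<alpha> (\<psi> t'))" for t t'
    using that A_adj_phiD[OF add_pow_d bij]
      A_adj_Jset_opposite_coord[OF add_pow_q bij_is_inj[OF bij] \<mu>_notin]
    by (auto simp: T_def \<psi>_def)
  ultimately have "colourable (A_adj d) ((phi d \<alpha> \<circ> \<psi>) ` T) 2"
    by (intro colourable_image) auto
  then show ?thesis
    by (simp add: J image_comp)
qed

theorem lemma9: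
  fixes p n s :: nat and \<mu> u1 u2 :: "'a::{field,finite}"
  assumes "prime p" and "odd p" and "n > 0" and "s > 0"
    and "s dvd 2 * n" and "odd (2 * n div s)" and "2 * n div s \<ge> 3"
    and "card (UNIV :: 'a set) = (p ^ n) ^ 2"
    and "\<mu> \<notin> Fq (p ^ n)"
    and "u1 \<in> Fq (p ^ n)" and "u2 \<in> Fq (p ^ n)"
    and "\<mu> ^ (p ^ s) = u1 + u2 * \<mu>"
    and "\<exists>w::'a. u2 = w ^ (p ^ s - 1)"
  shows "chromatic_number (A_adj (p ^ s)) (Kset (p ^ n) (p ^ s) \<mu>) \<le> 2 * p ^ n"
proof -
  have card_p: "card (UNIV :: 'a set) = p ^ (2 * n)"
    using assms(8) by (metis power_mult mult.commute)
  then have card: "card (UNIV :: 'a set) = (p ^ s) ^ (2 * n div s)"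
    using assms(5) by (simp flip: power_mult)
  have CHAR: "CHAR('a) = p"
    using CHAR_eq_of_card_eq_prime_power[OF assms(1) _ card_p] assms(3) by simp
  have add_pow: "(x + y) ^ (p ^ k) = x ^ (p ^ k) + y ^ (p ^ k)" for x y :: 'a and k
    by (rule freshmans_dream') (simp_all add: CHAR assms(1))
  have "\<not> p dvd 2"
    using assms(2) primes_dvd_imp_eq[OF assms(1) two_is_prime_nat] by auto
  then have two: "(2::'a) \<noteq> 0"
    using of_nat_eq_0_iff_char_dvd[of 2, where 'a = 'a] CHAR by simp
  have "inj (\<lambda>x::'a. x ^ p ^ s + x)"
    using inj_power_add_self[OF add_pow card assms(6) two] .
  then have bij: "bij (\<lambda>x::'a. x ^ p ^ s + x)"
    by (simp add: bij_def finite_UNIV_inj_surj)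
  have colourable: "colourable (A_adj (p ^ s)) (Kset (p ^ n) (p ^ s) \<mu>) (card (Fq (p ^ n) :: 'a set) * 2)"
    unfolding Kset_def using add_pow bij assms(9) two
    by (intro colourable_UN colourable_phi_Jset) simp_all
  have "card (Fq (p ^ n) :: 'a set) \<le> p ^ n"
    using self_le_power[of p n] prime_ge_2_nat[OF assms(1)] assms(3) by (intro card_Fq_le) simp
  then show ?thesis
    by (intro chromatic_number_le colourable_mono[OF colourable]) simp
qed

end
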